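(* Assume $|B|<m$ and let $\mathcal S_3=\{(w_1+uw_2,w_3)\in\mathcal R^m: w_1\in\Delta_A,\ w_2\in\Delta_B^c,\ w_3\in\Delta_C\}$. Then $\mathscr C_{\mathcal S_3}$ is a linear code over $R$ with parameters $\big(q^{|A|+|C|}(q^m-q^{|B|}),\ q^{m+|A|+|C|},\ 2(q-1)q^{|A|+|C|-1}(q^m-q^{|B|})\big)$ and Lee weight distribution: weight $0$ with frequency $1$; weight $2(q-1)q^{|A|+|C|-1}(q^m-q^{|B|})$ with frequency $q^{m+|A|+|C|}-2q^{m-|B|}+q^{m-|A\cup B|}$; weight $(q-1)q^{|A|+|C|-1}(2q^m-q^{|B|})$ with frequency $2(q^{m-|B|}-q^{m-|A\cup B|})$; weight $2(q-1)q^{m+|A|+|C|-1}$ with frequency $q^{m-|A\cup B|}-1$. Consequently $\mathscr C_{\mathcal S_3}$ is a $2$-weight code if $A\cup B=[m]$ or $A\subseteq B$, and a $3$-weight code otherwise.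
   Context: Let $q$ be a prime power, $\mathbb F_q$ the field of order $q$, $m\ge 2$ an integer and $[m]=\{1,\dots,m\}$. For $v\in\mathbb F_q^m$, $\mathrm{supp}(v)=\{i:v_i\ne0\}$ and $wt_H$ is Hamming weight. For nonempty $P\subseteq[m]$, $\Delta_P=\{v\in\mathbb F_q^m:\mathrm{supp}(v)\subseteq P\}$, $\Delta_P^c=\mathbb F_q^m\setminus\Delta_P$, $\Delta_P^*=\Delta_P\setminus\{\mathbf 0\}$. $A,B,C$ denote nonempty subsets of $[m]$. Let $R=\mathbb F_q[u]/\langle u^2\rangle$ and $\mathcal R=R\times\mathbb F_q$; each element of $\mathcal R^m$ is uniquely $(d+ue,f)$ with $d,e,f\in\mathbb F_q^m$. Define $\langle(d_1+ue_1,f_1),(d_2+ue_2,f_2)\rangle=(d_1+ue_1)\cdot(d_2+ue_2)+u\,f_1\cdot f_2\in R$, where $x\cdot y=\sum_i x_iy_i$. For a nonempty $\mathcal D\subseteq\mathcal R^m$ listed in a fixed order, $\mathscr C_{\mathcal D}=\{(\langle r,s\rangle)_{s\in\mathcal D}: r\in\mathcal R^m\}\subseteq R^{|\mathcal D|}$, an $R$-submodule (linear code over $R$). The Gray map $\Phi:R^n\to\mathbb F_q^{2n}$ is $\Phi(d+ue)=(e,d+e)$ for $d,e\in\mathbb F_q^n$; the Lee weight is $wt_L(x)=wt_H(\Phi(x))$. A code over $R$ has parameters $(n,K,D)$ if it has length $n$, cardinality $K$ and minimum nonzero Lee weight $D$. A $t$-weight code has exactly $t$ distinct nonzero weights. 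*)

theory Defs
  imports Main
begin

(* Index set [m] is modelled by a finite type 'm with CARD('m) = m;
   vectors in F_q^m are functions 'm => 'a, with 'a a finite field (q = CARD('a)). *)

definition dotv :: "('m::finite \<Rightarrow> 'a::field) \<Rightarrow> ('m \<Rightarrow> 'a) \<Rightarrow> 'a" where
  "dotv x y = (\<Sum>i\<in>UNIV. x i * y i)"

definition supp :: "('m \<Rightarrow> 'a::zero) \<Rightarrow> 'm set" where
  "supp v = {i. v i \<noteq> 0}"

definition Delta :: "'m set \<Rightarrow> ('m \<Rightarrow> 'a::zero) set" where
  "Delta P = {v. supp v \<subseteq> P}"

(* An element d + u e of R = F_q[u]/<u^2> is represented by the pair (d, e). *)
type_synonym 'a ring_R = "'a \<times> 'a"

definition R_add :: "'a::field ring_R \<Rightarrow> 'a ring_R \<Rightarrow> 'a ring_R" where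
  "R_add x y = (fst x + fst y, snd x + snd y)"

definition R_mult :: "'a::field ring_R \<Rightarrow> 'a ring_R \<Rightarrow> 'a ring_R" where
  "R_mult x y = (fst x * fst y, fst x * snd y + snd x * fst y)"

(* An element (d + u e, f) of \<R>^m is represented by the triple (d, e, f). *)
type_synonym ('m, 'a) elt_Rm = "('m \<Rightarrow> 'a) \<times> ('m \<Rightarrow> 'a) \<times> ('m \<Rightarrow> 'a)"

(* <(d1+u e1, f1), (d2+u e2, f2)> = (d1+u e1).(d2+u e2) + u f1.f2
                                 = d1.d2 + u (d1.e2 + e1.d2 + f1.f2) *)
definition ipR :: "('m::finite, 'a::field) elt_Rm \<Rightarrow> ('m, 'a) elt_Rm \<Rightarrow> 'a ring_R" where
  "ipR r s = (case r of (d1, e1, f1) \<Rightarrow> case s of (d2, e2, f2) \<Rightarrow>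
      (dotv d1 d2, dotv d1 e2 + dotv e1 d2 + dotv f1 f2))"

(* Codewords of C_D are functions on the (finite) defining set D; outside D they are 0. *)
definition codeC :: "('m::finite, 'a::field) elt_Rm set \<Rightarrow> (('m, 'a) elt_Rm \<Rightarrow> 'a ring_R) set" where
  "codeC D = {(\<lambda>s. if s \<in> D then ipR r s else (0, 0)) | r. True}"

(* Lee weight of d + u e: Hamming weight of the Gray image (e, d + e). *)
definition leeR :: "'a::field ring_R \<Rightarrow> nat" where
  "leeR x = (if snd x = 0 then 0 else 1) + (if fst x + snd x = 0 then 0 else 1)"

definition leeW :: "('m, 'a) elt_Rm set \<Rightarrow> (('m, 'a) elt_Rm \<Rightarrow> 'a::field ring_R) \<Rightarrow> nat" where
  "leeW D c = (\<Sum>s\<in>D. leeR (c s))"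

definition linear_code_R :: "('m, 'a) elt_Rm set \<Rightarrow> (('m, 'a) elt_Rm \<Rightarrow> 'a::field ring_R) set \<Rightarrow> bool" where
  "linear_code_R D C \<longleftrightarrow>
     (\<forall>c\<in>C. \<forall>s. s \<notin> D \<longrightarrow> c s = (0, 0)) \<and>
     (\<lambda>s. (0, 0)) \<in> C \<and>
     (\<forall>c1\<in>C. \<forall>c2\<in>C. (\<lambda>s. R_add (c1 s) (c2 s)) \<in> C) \<and>
     (\<forall>a. \<forall>c\<in>C. (\<lambda>s. R_mult a (c s)) \<in> C)"

definition nonzero_weights :: "('m, 'a) elt_Rm set \<Rightarrow> (('m, 'a) elt_Rm \<Rightarrow> 'a::field ring_R) set \<Rightarrow> nat set" where
  "nonzero_weights D C = {leeW D c | c. c \<in> C \<and> leeW D c \<noteq> 0}"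

definition min_lee :: "('m, 'a) elt_Rm set \<Rightarrow> (('m, 'a) elt_Rm \<Rightarrow> 'a::field ring_R) set \<Rightarrow> nat" where
  "min_lee D C = Min (nonzero_weights D C)"

definition S3 :: "'m set \<Rightarrow> 'm set \<Rightarrow> 'm set \<Rightarrow> ('m::finite, 'a::field) elt_Rm set" where
  "S3 A B C = {(w1, w2, w3). w1 \<in> Delta A \<and> w2 \<notin> Delta B \<and> w3 \<in> Delta C}"

end

theory Submission
  imports Defs "HOL-Library.FuncSet" "HOL-Library.Function_Algebras" "HOL-Library.Product_Plus"
begin

(* The two Gray coordinates of <r, s> are linear forms in s, namely dot3 (gray_form1 r) s and
   dot3 (gray_form2 r) s, so the Lee weight of the codeword of r counts the points of
   S3 = Delta3 A UNIV C - Delta3 A B C at which the first form is nonzero plus those at which the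
   second one is.  A linear form not vanishing on a coordinate subspace of dimension k is nonzero
   at exactly (q - 1) q^(k-1) of its points, and it vanishes on Delta3 A P C iff it lies in
   Delta3 (-A) (-P) (-C).  Hence, with cU and cB these counts for Delta3 A UNIV C and Delta3 A B C,
   a nonzero message r = (d, e, f) with e, f supported on A, C has weight 2 (cU - cB) + n cB, where
   n is the number of its two forms vanishing on Delta3 A B C.  As |B| < m, this weight is positive,
   so distinct messages give distinct codewords.  The messages whose first, resp. second, form
   vanishes on Delta3 A B C are subspaces K1, K2 of size q^(m-|B|) meeting in a subspace of size
   q^(m-|A u B|), and inclusion-exclusion gives the frequencies. *)

section \<open>Vectors supported on a set of coordinates\<close>

lemma dotv_add_left: "dotv (x + y) w = dotv x w + dotv y w"
  unfolding dotv_def by (simp add: distrib_right sum.distrib)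

lemma dotv_diff_left: "dotv (x - y) w = dotv x w - dotv y w"
  unfolding dotv_def by (simp add: left_diff_distrib sum_subtractf)

lemma dotv_add_right: "dotv l (x + y) = dotv l x + dotv l y"
  unfolding dotv_def by (simp add: distrib_left sum.distrib)

lemma dotv_scale_left: "dotv (\<lambda>i. c * x i) w = c * dotv x w"
  unfolding dotv_def by (simp add: sum_distrib_left mult.assoc)

lemma dotv_scale_right: "dotv l (\<lambda>i. c * x i) = c * dotv l x"
  unfolding dotv_def by (simp add: sum_distrib_left mult.left_commute)

lemma dotv_zero_left [simp]: "dotv 0 w = 0"
  unfolding dotv_def by simp

lemma dotv_zero_right [simp]: "dotv l 0 = 0"
  unfolding dotv_def by simp

definition unit_vec :: "'m \<Rightarrow> 'm \<Rightarrow> 'a::zero_neq_one" where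
  "unit_vec i = (\<lambda>k. if k = i then 1 else 0)"

lemma dotv_unit_vec_right [simp]: "dotv l (unit_vec i) = l i"
  unfolding dotv_def unit_vec_def by (simp add: if_distrib cong: if_cong)

definition proj :: "'m set \<Rightarrow> ('m \<Rightarrow> 'a::zero) \<Rightarrow> 'm \<Rightarrow> 'a" where
  "proj P v = (\<lambda>i. if i \<in> P then v i else 0)"

lemma mem_Delta_iff: "v \<in> Delta P \<longleftrightarrow> (\<forall>i. i \<notin> P \<longrightarrow> v i = 0)"
  unfolding Delta_def supp_def by auto

lemma Delta_UNIV [simp]: "Delta UNIV = UNIV"
  by (simp add: mem_Delta_iff set_eq_iff)

lemma zero_in_Delta [simp]: "0 \<in> Delta P"
  by (simp add: mem_Delta_iff)

lemma unit_vec_in_Delta: "i \<in> P \<Longrightarrow> unit_vec i \<in> Delta P"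
  by (simp add: mem_Delta_iff unit_vec_def)

lemma proj_in_Delta: "proj P v \<in> Delta P"
  by (simp add: proj_def mem_Delta_iff)

lemma add_in_Delta:
  "(v :: 'm \<Rightarrow> 'a::monoid_add) \<in> Delta P \<Longrightarrow> w \<in> Delta P \<Longrightarrow> v + w \<in> Delta P"
  by (simp add: mem_Delta_iff)

lemma diff_in_Delta:
  "(v :: 'm \<Rightarrow> 'a::group_add) \<in> Delta P \<Longrightarrow> w \<in> Delta P \<Longrightarrow> v - w \<in> Delta P"
  by (simp add: mem_Delta_iff)

lemma scale_in_Delta:
  "(v :: 'm \<Rightarrow> 'a::mult_zero) \<in> Delta P \<Longrightarrow> (\<lambda>i. c * v i) \<in> Delta P"
  by (simp add: mem_Delta_iff)

lemma Delta_Int: "Delta P \<inter> Delta Q = Delta (P \<inter> Q)"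
  by (auto simp: mem_Delta_iff)

lemma Delta_Compl_iff: "v \<in> Delta P \<Longrightarrow> v \<in> Delta (- P) \<longleftrightarrow> v = 0"
  by (auto simp: mem_Delta_iff fun_eq_iff)

lemma dotv_eq_0_if_Delta_Compl: "l \<in> Delta (- P) \<Longrightarrow> w \<in> Delta P \<Longrightarrow> dotv l w = 0"
  unfolding dotv_def mem_Delta_iff by (auto intro!: sum.neutral) blast

lemma dotv_proj_left: "w \<in> Delta P \<Longrightarrow> dotv (proj P l) w = dotv l w"
  unfolding dotv_def proj_def mem_Delta_iff by (rule sum.cong) auto

lemma card_Delta:
  "card (Delta P :: ('m::finite \<Rightarrow> 'a::{finite,zero}) set) = card (UNIV :: 'a set) ^ card P"
proof -
  have "bij_betw (\<lambda>v. restrict v P) (Delta P :: ('m \<Rightarrow> 'a) set) (P \<rightarrow>\<^sub>E UNIV)"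
  proof (rule bij_betw_byWitness[where f' = "\<lambda>g i. if i \<in> P then g i else 0"])
    show "\<forall>v \<in> Delta P. (\<lambda>i. if i \<in> P then restrict v P i else 0) = v"
      by (auto simp: mem_Delta_iff fun_eq_iff)
    show "\<forall>g \<in> P \<rightarrow>\<^sub>E UNIV. restrict (\<lambda>i. if i \<in> P then g i else 0) P = g"
      by (auto simp: PiE_def extensional_def fun_eq_iff)
  qed (auto simp: mem_Delta_iff)
  then show ?thesis
    by (simp add: bij_betw_same_card card_funcsetE)
qed

lemma card_Delta_Compl:
  "card (Delta (- P) :: ('m::finite \<Rightarrow> 'a::{finite,zero}) set) =
    card (UNIV :: 'a set) ^ (card (UNIV :: 'm set) - card P)"
  by (simp add: card_Delta Compl_eq_Diff_UNIV card_Diff_subset)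

section \<open>Linear forms on products of coordinate subspaces\<close>

definition Delta3 :: "'m set \<Rightarrow> 'm set \<Rightarrow> 'm set \<Rightarrow> ('m, 'a::zero) elt_Rm set" where
  "Delta3 A P C = Delta A \<times> Delta P \<times> Delta C"

fun dot3 :: "('m::finite, 'a::field) elt_Rm \<Rightarrow> ('m, 'a) elt_Rm \<Rightarrow> 'a" where
  "dot3 (l1, l2, l3) (w1, w2, w3) = dotv l1 w1 + dotv l2 w2 + dotv l3 w3"

fun scale3 :: "'a::field \<Rightarrow> ('m, 'a) elt_Rm \<Rightarrow> ('m, 'a) elt_Rm" where
  "scale3 c (x, y, z) = (\<lambda>i. c * x i, \<lambda>i. c * y i, \<lambda>i. c * z i)"

lemma card_Delta3:
  "card (Delta3 A P C :: ('m::finite, 'a::{finite,zero}) elt_Rm set) =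
    card (UNIV :: 'a set) ^ (card A + card P + card C)"
  by (simp add: Delta3_def card_cartesian_product card_Delta power_add)

lemma Delta3_mono: "B \<subseteq> P \<Longrightarrow> Delta3 A B C \<subseteq> Delta3 A P C"
  by (force simp: Delta3_def mem_Delta_iff)

lemma add_scale3_in_Delta3:
  "s \<in> Delta3 A P C \<Longrightarrow> s0 \<in> Delta3 A P C \<Longrightarrow> s + scale3 c s0 \<in> Delta3 A P C"
  by (cases s; cases s0) (simp add: Delta3_def add_in_Delta scale_in_Delta)

lemma add_scale3_cancel: "s + scale3 c s0 + scale3 (- c) s0 = s"
  by (cases s; cases s0) (simp add: fun_eq_iff)

lemma dot3_add_scale3: "dot3 l (s + scale3 c s0) = dot3 l s + c * dot3 l s0"
  by (cases l; cases s; cases s0) (simp add: dotv_add_right dotv_scale_right algebra_simps)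

lemma dot3_vanishes_on_Delta3_iff:
  "(\<forall>s \<in> Delta3 A P C. dot3 l s = 0) \<longleftrightarrow> l \<in> Delta3 (- A) (- P) (- C)"
proof
  assume vanish: "\<forall>s \<in> Delta3 A P C. dot3 l s = 0"
  obtain l1 l2 l3 where l: "l = (l1, l2, l3)"
    by (cases l)
  have "l1 i = 0" if "i \<in> A" for i
    using vanish[rule_format, of "(unit_vec i, 0, 0)"] that by (simp add: l Delta3_def unit_vec_in_Delta)
  moreover have "l2 i = 0" if "i \<in> P" for i
    using vanish[rule_format, of "(0, unit_vec i, 0)"] that by (simp add: l Delta3_def unit_vec_in_Delta)
  moreover have "l3 i = 0" if "i \<in> C" for i
    using vanish[rule_format, of "(0, 0, unit_vec i)"] that by (simp add: l Delta3_def unit_vec_in_Delta)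
  ultimately show "l \<in> Delta3 (- A) (- P) (- C)"
    by (simp add: l Delta3_def mem_Delta_iff)
next
  assume "l \<in> Delta3 (- A) (- P) (- C)"
  then show "\<forall>s \<in> Delta3 A P C. dot3 l s = 0"
    by (cases l) (auto simp: Delta3_def dotv_eq_0_if_Delta_Compl)
qed

lemma card_eq_card_UNIV_mult_card_zero_level:
  fixes \<phi> :: "'v \<Rightarrow> 'a::{finite,field}"
  assumes "finite S"
    and closed: "\<And>t s. s \<in> S \<Longrightarrow> \<tau> t s \<in> S"
    and shift: "\<And>t s. \<phi> (\<tau> t s) = \<phi> s + t"
    and inverse: "\<And>t s. \<tau> (- t) (\<tau> t s) = s"
  shows "card S = card (UNIV :: 'a set) * card {s \<in> S. \<phi> s = 0}"
proof -
  have level_card: "card {s \<in> S. \<phi> s = t} = card {s \<in> S. \<phi> s = 0}" for t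
  proof -
    have "bij_betw (\<tau> t) {s \<in> S. \<phi> s = 0} {s \<in> S. \<phi> s = t}"
    proof (rule bij_betw_byWitness[where f' = "\<tau> (- t)"])
      show "\<forall>s \<in> {s \<in> S. \<phi> s = 0}. \<tau> (- t) (\<tau> t s) = s"
        using inverse by blast
      show "\<forall>s \<in> {s \<in> S. \<phi> s = t}. \<tau> t (\<tau> (- t) s) = s"
        using inverse[of "- t"] by simp
      show "\<tau> t ` {s \<in> S. \<phi> s = 0} \<subseteq> {s \<in> S. \<phi> s = t}"
        using closed shift by auto
      show "\<tau> (- t) ` {s \<in> S. \<phi> s = t} \<subseteq> {s \<in> S. \<phi> s = 0}"
        using closed shift by auto
    qed
    then show ?thesis
      by (simp add: bij_betw_same_card)
  qed
  have "S = (\<Union>t. {s \<in> S. \<phi> s = t})"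
    by auto
  also have "card \<dots> = (\<Sum>t\<in>UNIV. card {s \<in> S. \<phi> s = t})"
    by (rule card_UN_disjoint) (use \<open>finite S\<close> in auto)
  also have "\<dots> = (\<Sum>t\<in>(UNIV :: 'a set). card {s \<in> S. \<phi> s = 0})"
    by (intro sum.cong refl level_card)
  finally show ?thesis
    by simp
qed

lemma card_dot3_neq_0:
  fixes l :: "('m::finite, 'a::{finite,field}) elt_Rm"
  shows "card {s \<in> Delta3 A P C. dot3 l s \<noteq> 0} =
    (if l \<in> Delta3 (- A) (- P) (- C) then 0
     else (card (UNIV :: 'a set) - 1) * card (UNIV :: 'a set) ^ (card A + card P + card C - 1))"
proof (cases "l \<in> Delta3 (- A) (- P) (- C)")
  case True
  then show ?thesis
    using dot3_vanishes_on_Delta3_iff by fastforce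
next
  case False
  let ?q = "card (UNIV :: 'a set)" and ?k = "card A + card P + card C"
  obtain s0 where s0: "s0 \<in> Delta3 A P C" "dot3 l s0 \<noteq> 0"
    using False dot3_vanishes_on_Delta3_iff by blast
  have "?q * card {s \<in> Delta3 A P C. dot3 l s = 0} = ?q ^ ?k"
    unfolding card_Delta3[symmetric]
  proof (rule card_eq_card_UNIV_mult_card_zero_level[symmetric])
    show "\<And>t s. s \<in> Delta3 A P C \<Longrightarrow> s + scale3 (t / dot3 l s0) s0 \<in> Delta3 A P C"
      using s0(1) by (simp add: add_scale3_in_Delta3)
    show "\<And>t s. dot3 l (s + scale3 (t / dot3 l s0) s0) = dot3 l s + t"
      using s0(2) by (simp add: dot3_add_scale3)
    show "\<And>t s. s + scale3 (t / dot3 l s0) s0 + scale3 (- t / dot3 l s0) s0 = s"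
      by (metis add_scale3_cancel minus_divide_left)
  qed simp
  moreover have "?k \<noteq> 0"
    using False by (auto simp: Delta3_def)
  then have "?q ^ ?k = ?q * ?q ^ (?k - 1)"
    by (cases ?k) simp_all
  ultimately have zeros: "card {s \<in> Delta3 A P C. dot3 l s = 0} = ?q ^ (?k - 1)"
    by simp
  have "{s \<in> Delta3 A P C. dot3 l s \<noteq> 0} = Delta3 A P C - {s \<in> Delta3 A P C. dot3 l s = 0}"
    by auto
  then have "card {s \<in> Delta3 A P C. dot3 l s \<noteq> 0} = ?q ^ ?k - ?q ^ (?k - 1)"
    by (simp add: card_Diff_subset card_Delta3 zeros)
  also have "\<dots> = (?q - 1) * ?q ^ (?k - 1)"
    using \<open>?q ^ ?k = ?q * ?q ^ (?k - 1)\<close> by (simp add: diff_mult_distrib)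
  finally show ?thesis
    using False by simp
qed

section \<open>Codewords and their Lee weights\<close>

definition codeword ::
  "('m::finite, 'a::field) elt_Rm set \<Rightarrow> ('m, 'a) elt_Rm \<Rightarrow> ('m, 'a) elt_Rm \<Rightarrow> 'a ring_R" where
  "codeword D r = (\<lambda>s. if s \<in> D then ipR r s else (0, 0))"

(* (x + u y) (d + u e, f) = (x d + u (x e + y d), x f): u acts as 0 on the F_q component. *)
fun R_smult :: "'a::field ring_R \<Rightarrow> ('m, 'a) elt_Rm \<Rightarrow> ('m, 'a) elt_Rm" where
  "R_smult (x, y) (d, e, f) = (\<lambda>i. x * d i, \<lambda>i. x * e i + y * d i, \<lambda>i. x * f i)"

fun gray_form1 :: "('m, 'a::field) elt_Rm \<Rightarrow> ('m, 'a) elt_Rm" where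
  "gray_form1 (d, e, f) = (e, d, f)"

fun gray_form2 :: "('m, 'a::field) elt_Rm \<Rightarrow> ('m, 'a) elt_Rm" where
  "gray_form2 (d, e, f) = (d + e, d, f)"

lemma codeC_eq_range_codeword: "codeC D = range (codeword D)"
  unfolding codeC_def codeword_def by auto

lemma R_add_eq_plus: "R_add x y = x + y"
  by (simp add: R_add_def plus_prod_def)

lemma ipR_add_left: "ipR (r + r') s = ipR r s + ipR r' s"
  by (cases r; cases r'; cases s) (simp add: ipR_def dotv_add_left)

lemma ipR_diff_left: "ipR (r - r') s = ipR r s - ipR r' s"
  by (cases r; cases r'; cases s) (simp add: ipR_def dotv_diff_left)

lemma snd_ipR: "snd (ipR r s) = dot3 (gray_form1 r) s"
  by (cases r; cases s) (simp add: ipR_def algebra_simps)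

lemma fst_plus_snd_ipR: "fst (ipR r s) + snd (ipR r s) = dot3 (gray_form2 r) s"
  by (cases r; cases s) (simp add: ipR_def dotv_add_left algebra_simps)

lemma codeword_add: "codeword D (r + r') = codeword D r + codeword D r'"
  by (simp add: codeword_def fun_eq_iff ipR_add_left)

lemma codeword_diff: "codeword D (r - r') = codeword D r - codeword D r'"
  by (simp add: codeword_def fun_eq_iff ipR_diff_left zero_prod_def)

lemma R_mult_codeword: "(\<lambda>s. R_mult a (codeword D r s)) = codeword D (R_smult a r)"
proof -
  have "R_mult a (ipR r s) = ipR (R_smult a r) s" for s
    by (cases a; cases r; cases s)
      (simp add: R_mult_def ipR_def dotv_add_left[unfolded plus_fun_def] dotv_scale_left algebra_simps)
  then show ?thesis
    by (simp add: codeword_def R_mult_def fun_eq_iff)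
qed

lemma linear_code_R_codeC:
  fixes D :: "('m::finite, 'a::field) elt_Rm set"
  shows "linear_code_R D (codeC D)"
  unfolding linear_code_R_def codeC_eq_range_codeword
proof (intro conjI ballI allI)
  have "codeword D 0 = (\<lambda>s. (0, 0))"
    by (simp add: codeword_def ipR_def zero_prod_def fun_eq_iff)
  then show "(\<lambda>s. (0, 0)) \<in> range (codeword D)"
    by (metis rangeI)
next
  fix c1 c2 assume "c1 \<in> range (codeword D)" "c2 \<in> range (codeword D)"
  then obtain r1 r2 where "c1 = codeword D r1" "c2 = codeword D r2"
    by blast
  then have "(\<lambda>s. R_add (c1 s) (c2 s)) = codeword D (r1 + r2)"
    by (simp add: codeword_add R_add_eq_plus plus_fun_def)
  then show "(\<lambda>s. R_add (c1 s) (c2 s)) \<in> range (codeword D)"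
    by simp
next
  fix a c assume "c \<in> range (codeword D)"
  then show "(\<lambda>s. R_mult a (c s)) \<in> range (codeword D)"
    using R_mult_codeword by blast
qed (auto simp: codeword_def)

lemma leeW_zero [simp]: "leeW D 0 = 0"
  by (simp add: leeW_def leeR_def zero_prod_def)

lemma leeW_codeword:
  fixes r :: "('m::finite, 'a::{finite,field}) elt_Rm"
  shows "leeW D (codeword D r) =
    card {s \<in> D. dot3 (gray_form1 r) s \<noteq> 0} + card {s \<in> D. dot3 (gray_form2 r) s \<noteq> 0}"
proof -
  have "leeR (codeword D r s) = of_bool (dot3 (gray_form1 r) s \<noteq> 0) + of_bool (dot3 (gray_form2 r) s \<noteq> 0)"
    if "s \<in> D" for s
    using that unfolding leeR_def codeword_def
    by (simp only: if_True fst_plus_snd_ipR) (simp add: snd_ipR)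
  then have "leeW D (codeword D r) =
      (\<Sum>s\<in>D. of_bool (dot3 (gray_form1 r) s \<noteq> 0) + of_bool (dot3 (gray_form2 r) s \<noteq> 0))"
    unfolding leeW_def by (rule sum.cong[OF refl])
  then show ?thesis
    by (simp add: sum.distrib Int_def conj_commute)
qed

lemma inj_on_codeword:
  assumes diff_closed: "\<And>r r'. r \<in> T \<Longrightarrow> r' \<in> T \<Longrightarrow> r - r' \<in> T"
    and nonzero_weight: "\<And>r. r \<in> T \<Longrightarrow> r \<noteq> 0 \<Longrightarrow> leeW D (codeword D r) \<noteq> 0"
  shows "inj_on (codeword D) T"
proof (rule inj_onI)
  fix r r' assume "r \<in> T" "r' \<in> T" "codeword D r = codeword D r'"
  then have "leeW D (codeword D (r - r')) = 0" and "r - r' \<in> T"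
    by (simp_all add: codeword_diff diff_closed)
  then have "r - r' = 0"
    using nonzero_weight by blast
  then show "r = r'"
    by simp
qed

section \<open>Counting weight classes\<close>

lemma card_Collect_image:
  assumes "inj_on f T"
  shows "card {c \<in> f ` T. P c} = card {r \<in> T. P (f r)}"
proof -
  have "{c \<in> f ` T. P c} = f ` {r \<in> T. P (f r)}"
    by auto
  then show ?thesis
    using assms by (simp add: card_image inj_on_subset)
qed

lemma card_weight_classes:
  fixes wt :: "'x \<Rightarrow> nat"
  assumes "finite T" "K1 \<subseteq> T" "K2 \<subseteq> T" "z \<in> K1" "z \<in> K2" "0 < w" "0 < \<delta>"
    and wt: "\<forall>r \<in> T. wt r =
      (if r = z then 0 else w + (of_bool (r \<in> K1) + of_bool (r \<in> K2)) * \<delta>)"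
  shows "wt ` T \<subseteq> {0, w, w + \<delta>, w + 2 * \<delta>}"
    and "card {r \<in> T. wt r = 0} = 1"
    and "int (card {r \<in> T. wt r = w}) =
      int (card T) - int (card K1) - int (card K2) + int (card (K1 \<inter> K2))"
    and "int (card {r \<in> T. wt r = w + \<delta>}) =
      int (card K1) + int (card K2) - 2 * int (card (K1 \<inter> K2))"
    and "int (card {r \<in> T. wt r = w + 2 * \<delta>}) = int (card (K1 \<inter> K2)) - 1"
proof -
  have fin: "finite K1" "finite K2"
    using assms(1-3) finite_subset by blast+
  have Un: "int (card (K1 \<union> K2)) = int (card K1) + int (card K2) - int (card (K1 \<inter> K2))"
    using card_Un_Int[OF fin] by simp
  show "wt ` T \<subseteq> {0, w, w + \<delta>, w + 2 * \<delta>}"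
    using wt by auto
  have "{r \<in> T. wt r = 0} = {z}"
    using assms by (auto simp: wt split: if_splits)
  then show "card {r \<in> T. wt r = 0} = 1"
    by simp
  have "{r \<in> T. wt r = w} = T - (K1 \<union> K2)"
    using assms by (auto simp: wt of_bool_def split: if_splits)
  then show "int (card {r \<in> T. wt r = w}) =
      int (card T) - int (card K1) - int (card K2) + int (card (K1 \<inter> K2))"
    using assms fin Un by (simp add: card_Diff_subset card_mono of_nat_diff)
  have "{r \<in> T. wt r = w + \<delta>} = (K1 \<union> K2) - (K1 \<inter> K2)"
    using assms by (auto simp: wt of_bool_def split: if_splits)
  moreover have "int (card (K1 \<union> K2 - K1 \<inter> K2)) = int (card (K1 \<union> K2)) - int (card (K1 \<inter> K2))"
    using fin by (simp add: card_Diff_subset card_mono of_nat_diff le_supI1)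
  ultimately show "int (card {r \<in> T. wt r = w + \<delta>}) =
      int (card K1) + int (card K2) - 2 * int (card (K1 \<inter> K2))"
    using Un by simp
  have "{r \<in> T. wt r = w + 2 * \<delta>} = K1 \<inter> K2 - {z}"
    using assms by (auto simp: wt of_bool_def split: if_splits)
  moreover have "0 < card (K1 \<inter> K2)"
    using assms(4,5) fin by (auto simp: card_gt_0_iff)
  ultimately show "int (card {r \<in> T. wt r = w + 2 * \<delta>}) = int (card (K1 \<inter> K2)) - 1"
    using assms(4,5) fin by (simp add: of_nat_diff)
qed

lemma nonzero_weights_eq:
  assumes "finite Cd" "\<forall>c \<in> Cd. leeW D c \<in> {0, W1, W2, W3}" "0 < W1" "0 < W2" "0 < W3"
  shows "nonzero_weights D Cd = {w \<in> {W1, W2, W3}. card {c \<in> Cd. leeW D c = w} \<noteq> 0}"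
proof -
  have "card {c \<in> Cd. leeW D c = w} \<noteq> 0 \<longleftrightarrow> (\<exists>c \<in> Cd. leeW D c = w)" for w
    using assms(1) by auto
  then show ?thesis
    using assms(2-5) by (auto simp: nonzero_weights_def)
qed

section \<open>The code defined by S3\<close>

lemma S3_eq_Diff: "S3 A B C = Delta3 A UNIV C - Delta3 A B C"
  by (auto simp: S3_def Delta3_def)

lemma card_S3:
  fixes A B C :: "'m::finite set"
  defines "q \<equiv> card (UNIV :: 'a::{finite,field} set)" and "m \<equiv> card (UNIV :: 'm set)"
  shows "card (S3 A B C :: ('m, 'a) elt_Rm set) = q ^ (card A + card C) * (q ^ m - q ^ card B)"
  by (simp add: S3_eq_Diff card_Diff_subset Delta3_mono card_Delta3 q_def m_def
      power_add diff_mult_distrib2 ac_simps)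

lemma card_S3_dot3_neq_0:
  fixes l :: "('m::finite, 'a::{finite,field}) elt_Rm"
  shows "card {s \<in> S3 A B C. dot3 l s \<noteq> 0} =
      card {s \<in> Delta3 A UNIV C. dot3 l s \<noteq> 0} - card {s \<in> Delta3 A B C. dot3 l s \<noteq> 0}"
proof -
  have "{s \<in> S3 A B C. dot3 l s \<noteq> 0} =
      {s \<in> Delta3 A UNIV C. dot3 l s \<noteq> 0} - {s \<in> Delta3 A B C. dot3 l s \<noteq> 0}"
    by (auto simp: S3_eq_Diff)
  moreover have "{s \<in> Delta3 A B C. dot3 l s \<noteq> 0} \<subseteq> {s \<in> Delta3 A UNIV C. dot3 l s \<noteq> 0}"
    using Delta3_mono[of B UNIV A C] by blast
  ultimately show ?thesis
    by (simp add: card_Diff_subset)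
qed

definition msg_space :: "'m set \<Rightarrow> 'm set \<Rightarrow> ('m, 'a::zero) elt_Rm set" where
  "msg_space A C = UNIV \<times> Delta A \<times> Delta C"

lemma card_msg_space:
  "card (msg_space A C :: ('m::finite, 'a::{finite,zero}) elt_Rm set) =
    card (UNIV :: 'a set) ^ (card (UNIV :: 'm set) + card A + card C)"
  using card_Delta[of "UNIV :: 'm set", where 'a = 'a]
  by (simp add: msg_space_def card_cartesian_product card_Delta power_add)

lemma msg_space_diff_closed:
  "(r :: ('m, 'a::group_add) elt_Rm) \<in> msg_space A C \<Longrightarrow> r' \<in> msg_space A C \<Longrightarrow>
    r - r' \<in> msg_space A C"
  by (cases r; cases r') (simp add: msg_space_def diff_in_Delta)

lemma codeC_S3_eq_image: "codeC (S3 A B C) = codeword (S3 A B C) ` msg_space A C"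
  unfolding codeC_eq_range_codeword
proof
  show "range (codeword (S3 A B C)) \<subseteq> codeword (S3 A B C) ` msg_space A C"
  proof
    fix c assume "c \<in> range (codeword (S3 A B C))"
    then obtain d e f where "c = codeword (S3 A B C) (d, e, f)"
      by (metis prod_cases3 rangeE)
    also have "\<dots> = codeword (S3 A B C) (d, proj A e, proj C f)"
      by (auto simp: codeword_def ipR_def S3_def dotv_proj_left fun_eq_iff)
    finally show "c \<in> codeword (S3 A B C) ` msg_space A C"
      by (simp add: msg_space_def proj_in_Delta)
  qed
qed auto

definition gray1_annihilators :: "'m set \<Rightarrow> ('m, 'a::field) elt_Rm set" where
  "gray1_annihilators P = (\<lambda>d. (d, 0, 0)) ` Delta (- P)"

definition gray2_annihilators :: "'m set \<Rightarrow> 'm set \<Rightarrow> ('m, 'a::field) elt_Rm set" where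
  "gray2_annihilators A P = (\<lambda>d. (d, - proj A d, 0)) ` Delta (- P)"

lemma gray_form1_annihilates_iff:
  assumes "r \<in> msg_space A C"
  shows "gray_form1 r \<in> Delta3 (- A) (- P) (- C) \<longleftrightarrow> r \<in> gray1_annihilators P"
  using assms by (cases r) (auto simp: msg_space_def Delta3_def gray1_annihilators_def Delta_Compl_iff)

lemma gray_form2_annihilates_iff:
  assumes "r \<in> msg_space A C"
  shows "gray_form2 r \<in> Delta3 (- A) (- P) (- C) \<longleftrightarrow> r \<in> gray2_annihilators A P"
proof -
  obtain d e f where r: "r = (d, e, f)" "e \<in> Delta A" "f \<in> Delta C"
    using assms by (cases r) (auto simp: msg_space_def)
  have "d + e \<in> Delta (- A) \<longleftrightarrow> e = - proj A d"
    using r(2) by (auto simp: mem_Delta_iff proj_def fun_eq_iff eq_neg_iff_add_eq_0 add.commute)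
  then show ?thesis
    using r by (auto simp: Delta3_def gray2_annihilators_def Delta_Compl_iff)
qed

lemma gray_annihilators_subset_msg_space:
  "gray1_annihilators P \<subseteq> msg_space A C" "gray2_annihilators A P \<subseteq> msg_space A C"
  by (auto simp: gray1_annihilators_def gray2_annihilators_def msg_space_def proj_def mem_Delta_iff)

lemma zero_in_gray_annihilators: "0 \<in> gray1_annihilators P" "0 \<in> gray2_annihilators A P"
  unfolding gray1_annihilators_def gray2_annihilators_def zero_prod_def
  by (auto intro!: image_eqI[where x = 0] simp: proj_def fun_eq_iff)

lemma gray_annihilators_UNIV: "gray1_annihilators UNIV = {0}" "gray2_annihilators A UNIV = {0}"
  by (auto simp: gray1_annihilators_def gray2_annihilators_def mem_Delta_iff proj_def zero_prod_def fun_eq_iff)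

lemma gray_annihilators_Int:
  "(gray1_annihilators P :: ('m, 'a::field) elt_Rm set) \<inter> gray2_annihilators A P =
    gray1_annihilators (A \<union> P)"
proof -
  have "- proj A d = 0 \<longleftrightarrow> d \<in> Delta (- A)" for d :: "'m \<Rightarrow> 'a"
    by (auto simp: proj_def mem_Delta_iff fun_eq_iff)
  then show ?thesis
    by (auto simp: gray1_annihilators_def gray2_annihilators_def Delta_Int[symmetric])
qed

lemma card_gray1_annihilators:
  "card (gray1_annihilators P :: ('m::finite, 'a::{finite,field}) elt_Rm set) =
    card (UNIV :: 'a set) ^ (card (UNIV :: 'm set) - card P)"
  unfolding gray1_annihilators_def by (simp add: card_image inj_on_def card_Delta_Compl)

lemma card_gray2_annihilators:
  "card (gray2_annihilators A P :: ('m::finite, 'a::{finite,field}) elt_Rm set) =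
    card (UNIV :: 'a set) ^ (card (UNIV :: 'm set) - card P)"
  unfolding gray2_annihilators_def by (simp add: card_image inj_on_def card_Delta_Compl)

lemma leeW_codeword_S3:
  fixes A B C :: "'m::finite set" and r :: "('m, 'a::{finite,field}) elt_Rm"
  assumes r: "r \<in> msg_space A C"
  defines "q \<equiv> card (UNIV :: 'a set)"
  defines "cU \<equiv> (q - 1) * q ^ (card A + card (UNIV :: 'm set) + card C - 1)"
    and "cB \<equiv> (q - 1) * q ^ (card A + card B + card C - 1)"
  shows "leeW (S3 A B C) (codeword (S3 A B C) r) =
    (if r = 0 then 0
     else 2 * (cU - cB) + (of_bool (r \<in> gray1_annihilators B) + of_bool (r \<in> gray2_annihilators A B)) * cB)"
proof -
  have count: "card {s \<in> S3 A B C. dot3 l s \<noteq> 0} =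
      (if l \<in> Delta3 (- A) (- UNIV) (- C) then 0 else cU) - (if l \<in> Delta3 (- A) (- B) (- C) then 0 else cB)"
    for l :: "('m, 'a) elt_Rm"
    unfolding card_S3_dot3_neq_0 card_dot3_neq_0 by (simp add: cU_def cB_def q_def)
  have "cB \<le> cU"
    using card_mono[of "UNIV :: 'm set" B] unfolding cU_def cB_def
    by (intro mult_le_mono2 power_increasing) (auto simp: q_def Suc_le_eq card_gt_0_iff)
  then show ?thesis
    unfolding leeW_codeword count gray_form1_annihilates_iff[OF r] gray_form2_annihilates_iff[OF r]
      gray_annihilators_UNIV
    by auto
qed

lemma two_le_card_UNIV_field: "2 \<le> card (UNIV :: 'a::{finite,field} set)"
  using card_mono[of "UNIV :: 'a set" "{0, 1}"] by simp

lemma S3_weights_arith: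
  fixes q a b c m :: nat
  assumes "2 \<le> q" "1 \<le> a" "b < m"
  defines "cU \<equiv> (q - 1) * q ^ (a + m + c - 1)" and "cB \<equiv> (q - 1) * q ^ (a + b + c - 1)"
  shows "0 < cB" and "cB < cU"
    and "2 * (cU - cB) = 2 * (q - 1) * q ^ (a + c - 1) * (q ^ m - q ^ b)"
    and "2 * (cU - cB) + cB = (q - 1) * q ^ (a + c - 1) * (2 * q ^ m - q ^ b)"
    and "2 * (cU - cB) + 2 * cB = 2 * (q - 1) * q ^ (m + a + c - 1)"
proof -
  define X where "X = (q - 1) * q ^ (a + c - 1)"
  have "a + m + c - 1 = (a + c - 1) + m" "a + b + c - 1 = (a + c - 1) + b"
    using assms(2) by simp_all
  then have cU: "cU = X * q ^ m" and cB: "cB = X * q ^ b"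
    by (simp_all add: cU_def cB_def X_def power_add mult.assoc)
  have "0 < X" and "q ^ b < q ^ m"
    using assms(1,3) by (simp_all add: X_def)
  then show "0 < cB" and "cB < cU"
    using assms(1) by (simp_all add: cU cB)
  have "2 * (cU - cB) = 2 * X * (q ^ m - q ^ b)"
    by (simp add: cU cB diff_mult_distrib2)
  then show "2 * (cU - cB) = 2 * (q - 1) * q ^ (a + c - 1) * (q ^ m - q ^ b)"
    by (simp only: X_def mult.assoc)
  have "2 * (cU - cB) + cB = X * (2 * q ^ m - q ^ b)"
    using \<open>cB < cU\<close> by (simp add: cU cB diff_mult_distrib2)
  then show "2 * (cU - cB) + cB = (q - 1) * q ^ (a + c - 1) * (2 * q ^ m - q ^ b)"
    by (simp only: X_def mult.assoc)
  have "m + a + c - 1 = (a + c - 1) + m"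
    using assms(2) by simp
  then show "2 * (cU - cB) + 2 * cB = 2 * (q - 1) * q ^ (m + a + c - 1)"
    using \<open>cB < cU\<close> by (simp add: cU X_def power_add mult.assoc)
qed

lemma inj_on_codeword_S3:
  fixes A B C :: "'m::finite set"
  assumes "A \<noteq> {}" "card B < card (UNIV :: 'm set)"
  shows "inj_on (codeword (S3 A B C :: ('m, 'a::{finite,field}) elt_Rm set)) (msg_space A C)"
proof (rule inj_on_codeword[OF msg_space_diff_closed])
  have "1 \<le> card A"
    using assms(1) by (simp add: Suc_le_eq card_gt_0_iff)
  note arith = S3_weights_arith[OF two_le_card_UNIV_field[where 'a = 'a] this assms(2), of "card C"]
  fix r :: "('m, 'a) elt_Rm"
  assume "r \<in> msg_space A C" "r \<noteq> 0"
  then show "leeW (S3 A B C) (codeword (S3 A B C) r) \<noteq> 0"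
    using arith(1,2) by (simp add: leeW_codeword_S3)
qed

lemma card_codeC_S3:
  fixes A B C :: "'m::finite set"
  assumes "A \<noteq> {}" "card B < card (UNIV :: 'm set)"
  defines "q \<equiv> card (UNIV :: 'a::{finite,field} set)" and "m \<equiv> card (UNIV :: 'm set)"
  shows "card (codeC (S3 A B C :: ('m, 'a) elt_Rm set)) = q ^ (m + card A + card C)"
  by (simp add: codeC_S3_eq_image card_image inj_on_codeword_S3[OF assms(1,2)] card_msg_space
      q_def m_def)

lemma weight_distribution_S3:
  fixes A B C :: "'m::finite set"
  assumes "A \<noteq> {}" "card B < card (UNIV :: 'm set)"
  defines "q \<equiv> card (UNIV :: 'a::{finite,field} set)" and "m \<equiv> card (UNIV :: 'm set)"
  defines "D \<equiv> S3 A B C :: ('m, 'a) elt_Rm set"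
    and "W1 \<equiv> 2 * (q - 1) * q ^ (card A + card C - 1) * (q ^ m - q ^ card B)"
    and "W2 \<equiv> (q - 1) * q ^ (card A + card C - 1) * (2 * q ^ m - q ^ card B)"
    and "W3 \<equiv> 2 * (q - 1) * q ^ (m + card A + card C - 1)"
  shows "0 < W1" and "W1 < W2" and "W2 < W3"
    and "\<forall>c \<in> codeC D. leeW D c \<in> {0, W1, W2, W3}"
    and "card {c \<in> codeC D. leeW D c = 0} = 1"
    and "int (card {c \<in> codeC D. leeW D c = W1})
        = int q ^ (m + card A + card C) - 2 * int q ^ (m - card B) + int q ^ (m - card (A \<union> B))"
    and "int (card {c \<in> codeC D. leeW D c = W2})
        = 2 * (int q ^ (m - card B) - int q ^ (m - card (A \<union> B)))"
    and "int (card {c \<in> codeC D. leeW D c = W3}) = int q ^ (m - card (A \<union> B)) - 1"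
proof -
  let ?T = "msg_space A C :: ('m, 'a) elt_Rm set"
  let ?K1 = "gray1_annihilators B :: ('m, 'a) elt_Rm set"
    and ?K2 = "gray2_annihilators A B :: ('m, 'a) elt_Rm set"
  define cU where "cU = (q - 1) * q ^ (card A + m + card C - 1)"
  define cB where "cB = (q - 1) * q ^ (card A + card B + card C - 1)"
  have "1 \<le> card A"
    using assms(1) by (simp add: Suc_le_eq card_gt_0_iff)
  note arith = S3_weights_arith[OF two_le_card_UNIV_field[where 'a = 'a, folded q_def] this
      assms(2)[folded m_def], of "card C", folded cU_def cB_def]
  have W: "W1 = 2 * (cU - cB)" "W2 = W1 + cB" "W3 = W1 + 2 * cB"
    using arith(3-5) by (simp_all add: W1_def W2_def W3_def)
  then show "0 < W1" "W1 < W2" "W2 < W3"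
    using arith(1,2) by simp_all
  have weight: "\<forall>r \<in> ?T. leeW D (codeword D r) =
      (if r = 0 then 0 else W1 + (of_bool (r \<in> ?K1) + of_bool (r \<in> ?K2)) * cB)"
    unfolding W(1) cU_def cB_def q_def m_def D_def using leeW_codeword_S3 by blast
  note classes = card_weight_classes[OF _ gray_annihilators_subset_msg_space zero_in_gray_annihilators
      \<open>0 < W1\<close> arith(1) weight, folded W(2,3), simplified]
  have class_card: "card {c \<in> codeC D. leeW D c = w} = card {r \<in> ?T. leeW D (codeword D r) = w}" for w
    unfolding D_def codeC_S3_eq_image by (rule card_Collect_image[OF inj_on_codeword_S3[OF assms(1,2)]])
  show "\<forall>c \<in> codeC D. leeW D c \<in> {0, W1, W2, W3}"
    using classes(1) by (auto simp: D_def codeC_S3_eq_image)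
  show "card {c \<in> codeC D. leeW D c = 0} = 1"
    "int (card {c \<in> codeC D. leeW D c = W1})
        = int q ^ (m + card A + card C) - 2 * int q ^ (m - card B) + int q ^ (m - card (A \<union> B))"
    "int (card {c \<in> codeC D. leeW D c = W2}) = 2 * (int q ^ (m - card B) - int q ^ (m - card (A \<union> B)))"
    "int (card {c \<in> codeC D. leeW D c = W3}) = int q ^ (m - card (A \<union> B)) - 1"
    unfolding class_card classes(2-5) card_msg_space card_gray1_annihilators card_gray2_annihilators
      gray_annihilators_Int
    by (simp_all add: q_def m_def algebra_simps)
qed

lemma S3_frequencies_sign:
  fixes A B :: "'m::finite set" and q c :: nat
  assumes "2 \<le> q" "A \<noteq> {}"
  defines "m \<equiv> card (UNIV :: 'm set)"
  shows "0 < int q ^ (m + card A + c) - 2 * int q ^ (m - card B) + int q ^ (m - card (A \<union> B))"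
    and "2 * (int q ^ (m - card B) - int q ^ (m - card (A \<union> B))) = 0 \<longleftrightarrow> A \<subseteq> B"
    and "int q ^ (m - card (A \<union> B)) - 1 = 0 \<longleftrightarrow> A \<union> B = UNIV"
proof -
  have "int q ^ (m - card B) \<le> int q ^ m"
    using assms(1) by (intro power_increasing) auto
  moreover have "2 * int q ^ m \<le> int q ^ Suc m"
    using assms(1) by (simp add: mult_right_mono)
  also have "\<dots> \<le> int q ^ (m + card A + c)"
    using assms(1,2) by (intro power_increasing) (auto simp: Suc_le_eq card_gt_0_iff)
  moreover have "1 \<le> int q ^ (m - card (A \<union> B))"
    using assms(1) by simp
  ultimately show "0 < int q ^ (m + card A + c) - 2 * int q ^ (m - card B) + int q ^ (m - card (A \<union> B))"
    by linarith
  have "card B \<le> card (A \<union> B)" "card (A \<union> B) \<le> m"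
    by (simp_all add: card_mono m_def)
  moreover have "card B = card (A \<union> B) \<longleftrightarrow> A \<subseteq> B"
  proof
    assume "card B = card (A \<union> B)"
    then have "B = A \<union> B"
      by (intro card_subset_eq) auto
    then show "A \<subseteq> B"
      by blast
  qed (simp add: Un_absorb1)
  moreover have "card (A \<union> B) = m \<longleftrightarrow> A \<union> B = UNIV"
  proof
    assume "card (A \<union> B) = m"
    then show "A \<union> B = UNIV"
      by (intro card_subset_eq) (auto simp: m_def)
  qed (simp add: m_def)
  ultimately show "2 * (int q ^ (m - card B) - int q ^ (m - card (A \<union> B))) = 0 \<longleftrightarrow> A \<subseteq> B"
    and "int q ^ (m - card (A \<union> B)) - 1 = 0 \<longleftrightarrow> A \<union> B = UNIV"
    using assms(1) power_inject_exp[of "int q" "m - card B" "m - card (A \<union> B)"]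
      power_inject_exp[of "int q" "m - card (A \<union> B)" 0] by auto
qed

lemma nonzero_weights_S3:
  fixes A B C :: "'m::finite set"
  assumes "A \<noteq> {}" "card B < card (UNIV :: 'm set)"
  defines "q \<equiv> card (UNIV :: 'a::{finite,field} set)" and "m \<equiv> card (UNIV :: 'm set)"
  defines "D \<equiv> S3 A B C :: ('m, 'a) elt_Rm set"
    and "W1 \<equiv> 2 * (q - 1) * q ^ (card A + card C - 1) * (q ^ m - q ^ card B)"
    and "W2 \<equiv> (q - 1) * q ^ (card A + card C - 1) * (2 * q ^ m - q ^ card B)"
    and "W3 \<equiv> 2 * (q - 1) * q ^ (m + card A + card C - 1)"
  shows "min_lee D (codeC D) = W1"
    and "card (nonzero_weights D (codeC D)) = (if A \<union> B = UNIV \<or> A \<subseteq> B then 2 else 3)"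
proof -
  note dist = weight_distribution_S3[where C = C and 'a = 'a, OF assms(1,2),
      folded q_def m_def, folded D_def W1_def W2_def W3_def]
  note sign = S3_frequencies_sign[where B = B, OF two_le_card_UNIV_field[where 'a = 'a] assms(1),
      folded q_def m_def]
  have "0 < int (card {c \<in> codeC D. leeW D c = W1})"
    unfolding dist(6) by (rule sign(1))
  then have "card {c \<in> codeC D. leeW D c = W1} \<noteq> 0"
    by linarith
  moreover have "card {c \<in> codeC D. leeW D c = W2} \<noteq> 0 \<longleftrightarrow> \<not> A \<subseteq> B"
    by (subst of_nat_eq_0_iff[symmetric, where 'a = int]) (simp only: dist(7) sign(2))
  moreover have "card {c \<in> codeC D. leeW D c = W3} \<noteq> 0 \<longleftrightarrow> A \<union> B \<noteq> UNIV"
    by (subst of_nat_eq_0_iff[symmetric, where 'a = int]) (simp only: dist(8) sign(3))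
  moreover have "nonzero_weights D (codeC D) =
      {w \<in> {W1, W2, W3}. card {c \<in> codeC D. leeW D c = w} \<noteq> 0}"
    using dist(1-4) by (intro nonzero_weights_eq) simp_all
  ultimately have NW: "nonzero_weights D (codeC D) =
      insert W1 ((if A \<subseteq> B then {} else {W2}) \<union> (if A \<union> B = UNIV then {} else {W3}))"
    by auto
  show "min_lee D (codeC D) = W1"
    unfolding min_lee_def NW using dist(2,3) by (intro Min_eqI) (auto split: if_splits)
  have "B \<noteq> UNIV"
    using assms(2) by auto
  then show "card (nonzero_weights D (codeC D)) = (if A \<union> B = UNIV \<or> A \<subseteq> B then 2 else 3)"
    unfolding NW using dist(2,3) by auto
qed

theorem mainTheorem3:
  fixes A B C :: "'m::finite set"
    and q m :: nat
    and D :: "('m, 'a::{finite, field}) elt_Rm set"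
    and Cd :: "(('m, 'a) elt_Rm \<Rightarrow> 'a ring_R) set"
    and W1 W2 W3 :: nat
  defines "q \<equiv> card (UNIV :: 'a set)" and "m \<equiv> card (UNIV :: 'm set)"
    and "D \<equiv> S3 A B C" and "Cd \<equiv> codeC D"
    and "W1 \<equiv> 2 * (q - 1) * q ^ (card A + card C - 1) * (q ^ m - q ^ card B)"
    and "W2 \<equiv> (q - 1) * q ^ (card A + card C - 1) * (2 * q ^ m - q ^ card B)"
    and "W3 \<equiv> 2 * (q - 1) * q ^ (m + card A + card C - 1)"
  assumes "m \<ge> 2"
    and "A \<noteq> {}" and "B \<noteq> {}" and "C \<noteq> {}"
    and "card B < m"
  shows "linear_code_R D Cd
    \<and> card D = q ^ (card A + card C) * (q ^ m - q ^ card B)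
    \<and> card Cd = q ^ (m + card A + card C)
    \<and> min_lee D Cd = W1
    \<and> (\<forall>c\<in>Cd. leeW D c \<in> {0, W1, W2, W3})
    \<and> card {c\<in>Cd. leeW D c = 0} = 1
    \<and> int (card {c\<in>Cd. leeW D c = W1})
        = int q ^ (m + card A + card C) - 2 * int q ^ (m - card B) + int q ^ (m - card (A \<union> B))
    \<and> int (card {c\<in>Cd. leeW D c = W2})
        = 2 * (int q ^ (m - card B) - int q ^ (m - card (A \<union> B)))
    \<and> int (card {c\<in>Cd. leeW D c = W3}) = int q ^ (m - card (A \<union> B)) - 1
    \<and> card (nonzero_weights D Cd) = (if A \<union> B = UNIV \<or> A \<subseteq> B then 2 else 3)"
proof -
  have hyps: "A \<noteq> {}" "card B < card (UNIV :: 'm set)"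
    using assms(2,9,12) by simp_all
  show ?thesis
    unfolding assms(1-7)
    using linear_code_R_codeC card_S3 card_codeC_S3[OF hyps] weight_distribution_S3[OF hyps]
      nonzero_weights_S3[OF hyps]
    by blast
qed

end
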